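(* Let $f\in C(\mathbb{R}^2)$ be $\kappa$-Lipschitz and satisfy $f(r+l,\tau+k)=f(r,\tau)$ for all $(l,k)\in\mathbb{Z}^2$, and let $v(\tau;c)$ be the solution of $\dot v=f(v,\tau)$, $\tau>0$, $v(0)=c$. Then for all $\sigma,l,t>0$ and all $c\in\mathbb{R}$, \[v((\sigma+l)t;(\sigma+l)c)\le v(\sigma t;\sigma c)+v(lt;lc)+2(\|f\|_\infty+1).\] *)

theory Defs
  imports "HOL-Analysis.Analysis"
begin

end

theory Submission
  imports Defs
begin

text \<open>Integer translates \<open>v(\<tau> - n; c) + m\<close> of solutions are again solutions by periodicity,
  and the Lipschitz bound gives the comparison principle. Rounding the initial value up yields
  \<open>v(T\<^sub>1; c\<^sub>1 + c\<^sub>2) \<le> v(T\<^sub>1; c\<^sub>1) + \<lceil>c\<^sub>2\<rceil>\<close>. On \<open>[T\<^sub>1, T\<^sub>1 + T\<^sub>2]\<close> the solution is then compared with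
  \<open>v(\<tau> - \<lfloor>T\<^sub>1\<rfloor>; c\<^sub>2) + j\<close> for the least admissible integer \<open>j\<close>. Since \<open>|v'| \<le> \<parallel>f\<parallel>\<^sub>\<infinity>\<close>, the time offset
  \<open>T\<^sub>1 - \<lfloor>T\<^sub>1\<rfloor> \<in> [0, 1]\<close> costs at most \<open>\<parallel>f\<parallel>\<^sub>\<infinity>\<close> at each end, and each rounding costs at most 1.
  The theorem is the case \<open>T\<^sub>1 = \<sigma> t\<close>, \<open>T\<^sub>2 = l t\<close>, \<open>c\<^sub>1 = \<sigma> c\<close>, \<open>c\<^sub>2 = l c\<close>.\<close>

lemma periodic_continuous_bounded:
  fixes f :: "real \<times> real \<Rightarrow> 'a::metric_space"
  assumes cont: "continuous_on UNIV f"
    and per: "\<And>r \<tau> (i::int) (k::int). f (r + of_int i, \<tau> + of_int k) = f (r, \<tau>)"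
  shows "bounded (range f)"
proof -
  have "range f \<subseteq> f ` ({0..1} \<times> {0..1})"
  proof (clarify)
    fix r \<tau> :: real
    have "f (r, \<tau>) = f (frac r + of_int \<lfloor>r\<rfloor>, frac \<tau> + of_int \<lfloor>\<tau>\<rfloor>)"
      by (simp add: frac_def)
    also have "\<dots> = f (frac r, frac \<tau>)"
      by (rule per)
    finally show "f (r, \<tau>) \<in> f ` ({0..1} \<times> {0..1})"
      by (auto simp: frac_lt_1 less_imp_le)
  qed
  moreover have "compact (f ` ({0..1} \<times> {0..1}))"
    by (intro compact_continuous_image continuous_on_subset[OF cont] compact_Times) auto
  ultimately show ?thesis
    using bounded_subset compact_imp_bounded by blast
qed

lemma continuous_on_last_nonpos:
  fixes d :: "real \<Rightarrow> real"
  assumes cont: "continuous_on {a..b} d" and "d a \<le> 0" and "a \<le> b"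
  obtains t0 where "a \<le> t0" "t0 \<le> b" "d t0 \<le> 0" "\<And>x. t0 < x \<Longrightarrow> x \<le> b \<Longrightarrow> d x > 0"
proof -
  define S where "S = {x \<in> {a..b}. d x \<le> 0}"
  have "closed S"
    unfolding S_def using continuous_closed_preimage[OF cont closed_atLeastAtMost, of "{..0}"]
    by (simp add: vimage_def Int_def)
  moreover have "a \<in> S" and bdd: "bdd_above S"
    using assms by (auto simp: S_def intro: bdd_aboveI[of _ b])
  ultimately have "Sup S \<in> S"
    by (intro closed_contains_Sup) auto
  moreover have "d x > 0" if "Sup S < x" "x \<le> b" for x
    using cSup_upper[OF _ bdd, of x] that \<open>Sup S \<in> S\<close> by (force simp: S_def)
  ultimately show thesis
    by (intro that[of "Sup S"]) (auto simp: S_def)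
qed

definition solves_ode_from :: "(real \<times> real \<Rightarrow> real) \<Rightarrow> real \<Rightarrow> (real \<Rightarrow> real) \<Rightarrow> bool" where
  "solves_ode_from f a u \<longleftrightarrow>
     continuous_on {a..} u \<and> (\<forall>\<tau>>a. (u has_real_derivative f (u \<tau>, \<tau>)) (at \<tau>))"

lemma solves_ode_from_mono:
  assumes "solves_ode_from f a u" and "a \<le> b"
  shows "solves_ode_from f b u"
  using assms unfolding solves_ode_from_def by (auto elim: continuous_on_subset)

lemma solves_ode_from_shift_int:
  assumes per: "\<And>r \<tau> (i::int) (k::int). f (r + of_int i, \<tau> + of_int k) = f (r, \<tau>)"
    and sol: "solves_ode_from f a u"
  shows "solves_ode_from f (a + of_int n) (\<lambda>s. u (s - of_int n) + of_int m)"
  unfolding solves_ode_from_def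
proof (intro conjI allI impI)
  have "continuous_on {a + of_int n..} (u \<circ> (\<lambda>s. s - of_int n))"
    using sol unfolding solves_ode_from_def
    by (intro continuous_on_compose continuous_intros) (auto elim: continuous_on_subset)
  then show "continuous_on {a + of_int n..} (\<lambda>s. u (s - of_int n) + of_int m)"
    by (auto intro!: continuous_intros simp: o_def)
next
  fix \<tau> assume "\<tau> > a + of_int n"
  then have "(u has_real_derivative f (u (\<tau> - of_int n), \<tau> - of_int n)) (at (\<tau> - of_int n))"
    using sol unfolding solves_ode_from_def by simp
  then have "((\<lambda>s. u (s - of_int n) + of_int m) has_real_derivative
               f (u (\<tau> - of_int n), \<tau> - of_int n)) (at \<tau>)"
    by (auto intro!: derivative_eq_intros DERIV_chain2[where f = u])
  moreover have "f (u (\<tau> - of_int n) + of_int m, \<tau> - of_int n + of_int n)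
                 = f (u (\<tau> - of_int n), \<tau> - of_int n)"
    by (rule per)
  ultimately show "((\<lambda>s. u (s - of_int n) + of_int m) has_real_derivative
                     f (u (\<tau> - of_int n) + of_int m, \<tau>)) (at \<tau>)"
    by simp
qed

lemma solves_ode_from_comparison:
  assumes lip: "\<And>x y \<tau>. y \<le> x \<Longrightarrow> f (x, \<tau>) - f (y, \<tau>) \<le> \<kappa> * (x - y)"
    and w: "solves_ode_from f a w" and u: "solves_ode_from f a u"
    and init: "w a \<le> u a" and "a \<le> b"
  shows "w b \<le> u b"
proof (rule ccontr)
  assume "\<not> w b \<le> u b"
  define d where "d x = w x - u x" for x
  have "continuous_on {a..b} d"
    using w u unfolding solves_ode_from_def d_def
    by (intro continuous_intros) (auto elim: continuous_on_subset)
  then obtain t0 where t0: "a \<le> t0" "t0 \<le> b" "d t0 \<le> 0"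
    and pos: "\<And>x. t0 < x \<Longrightarrow> x \<le> b \<Longrightarrow> d x > 0"
    using continuous_on_last_nonpos init \<open>a \<le> b\<close> by (metis d_def diff_le_0_iff_le)
  have "d b > 0"
    using \<open>\<not> w b \<le> u b\<close> by (simp add: d_def)
  define h where "h x = exp (- \<kappa> * x) * d x" for x
  have "h b \<le> h t0"
  proof (rule DERIV_nonpos_imp_decreasing_open[OF \<open>t0 \<le> b\<close>])
    fix x assume x: "t0 < x" "x < b"
    then have "x > a" using t0 by linarith
    then have "(h has_real_derivative
                 exp (- \<kappa> * x) * ((f (w x, x) - f (u x, x)) - \<kappa> * d x)) (at x)"
      using w u unfolding solves_ode_from_def h_def d_def
      by (auto intro!: derivative_eq_intros simp: algebra_simps)
    moreover have "f (w x, x) - f (u x, x) \<le> \<kappa> * d x"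
      using lip pos[of x] x by (simp add: d_def)
    ultimately show "\<exists>y. (h has_real_derivative y) (at x) \<and> y \<le> 0"
      by (auto intro!: mult_nonneg_nonpos)
  next
    show "continuous_on {t0..b} h"
      using \<open>continuous_on {a..b} d\<close> t0 unfolding h_def
      by (intro continuous_intros) (auto elim: continuous_on_subset)
  qed
  moreover have "h t0 \<le> 0" and "h b > 0"
    using t0 \<open>d b > 0\<close> by (simp_all add: h_def mult_nonneg_nonpos)
  ultimately show False by linarith
qed

lemma solves_ode_from_increment_bound:
  assumes f_le: "\<And>p. \<bar>f p\<bar> \<le> M" and sol: "solves_ode_from f a u"
    and "a \<le> \<tau>1" and "\<tau>1 \<le> \<tau>2"
  shows "\<bar>u \<tau>2 - u \<tau>1\<bar> \<le> M * (\<tau>2 - \<tau>1)"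
proof (cases "\<tau>1 < \<tau>2")
  case True
  have "norm (u \<tau>2 - u \<tau>1) \<le> M * \<tau>2 - M * \<tau>1"
  proof (rule differentiable_bound_general[OF True, where f' = "\<lambda>x. f (u x, x)" and \<phi>' = "\<lambda>_. M"])
    show "continuous_on {\<tau>1..\<tau>2} u"
      using sol \<open>a \<le> \<tau>1\<close> unfolding solves_ode_from_def by (auto elim: continuous_on_subset)
    show "(u has_vector_derivative f (u x, x)) (at x)" if "\<tau>1 < x" for x
      using sol that \<open>a \<le> \<tau>1\<close>
      by (simp add: solves_ode_from_def has_real_derivative_iff_has_vector_derivative[symmetric])
    show "((*) M has_vector_derivative M) (at x)" for x
      by (auto intro!: derivative_eq_intros simp: has_real_derivative_iff_has_vector_derivative[symmetric])
  qed (use f_le in \<open>auto intro: continuous_intros\<close>)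
  then show ?thesis
    by (simp add: right_diff_distrib)
qed (use \<open>\<tau>1 \<le> \<tau>2\<close> in simp)

lemma solves_ode_from_le_shifted:
  assumes per: "\<And>r \<tau> (i::int) (k::int). f (r + of_int i, \<tau> + of_int k) = f (r, \<tau>)"
    and lip: "\<And>x y \<tau>. y \<le> x \<Longrightarrow> f (x, \<tau>) - f (y, \<tau>) \<le> \<kappa> * (x - y)"
    and w: "solves_ode_from f a w" and u: "solves_ode_from f 0 u"
    and "of_int n \<le> a" and "w a \<le> u (a - of_int n) + of_int m" and "a \<le> b"
  shows "w b \<le> u (b - of_int n) + of_int m"
proof -
  have "solves_ode_from f a (\<lambda>s. u (s - of_int n) + of_int m)"
    using solves_ode_from_shift_int[OF per u] \<open>of_int n \<le> a\<close>
    by (auto intro: solves_ode_from_mono)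
  from solves_ode_from_comparison[OF lip w this] show ?thesis
    using assms by simp
qed

lemma solves_ode_from_subadditive:
  assumes per: "\<And>r \<tau> (i::int) (k::int). f (r + of_int i, \<tau> + of_int k) = f (r, \<tau>)"
    and lip: "\<And>x y \<tau>. y \<le> x \<Longrightarrow> f (x, \<tau>) - f (y, \<tau>) \<le> \<kappa> * (x - y)"
    and f_le: "\<And>p. \<bar>f p\<bar> \<le> M"
    and sol: "\<And>c. solves_ode_from f 0 (\<lambda>\<tau>. v \<tau> c)" and init: "\<And>c. v 0 c = c"
    and "0 \<le> T1" and "0 \<le> T2"
  shows "v (T1 + T2) (c1 + c2) \<le> v T1 c1 + v T2 c2 + 2 * (M + 1)"
proof -
  note increment = solves_ode_from_increment_bound[OF f_le sol]
  have "0 \<le> M"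
    using order_trans[OF abs_ge_zero f_le] .
  define k where "k = \<lceil>c2\<rceil>"
  have "v T1 (c1 + c2) \<le> v T1 c1 + k"
    using solves_ode_from_le_shifted[OF per lip sol sol, where n = 0 and m = k and b = T1]
      \<open>0 \<le> T1\<close> by (simp add: init k_def)
  define n where "n = \<lfloor>T1\<rfloor>"
  define s where "s = T1 - n"
  have s: "0 \<le> s" "s \<le> 1" "of_int n \<le> T1" "T1 + T2 - n = T2 + s"
    unfolding s_def n_def by linarith+
  define j where "j = \<lceil>v T1 c1 + k - c2 + M\<rceil>"
  have "v s c2 \<ge> c2 - M"
    using increment[of 0 s c2] s \<open>0 \<le> M\<close> mult_left_le[of s M] by (simp add: init)
  then have "v T1 (c1 + c2) \<le> v (T1 - n) c2 + j"
    using \<open>v T1 (c1 + c2) \<le> v T1 c1 + k\<close> unfolding j_def s_def by linarith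
  then have "v (T1 + T2) (c1 + c2) \<le> v (T2 + s) c2 + j"
    using solves_ode_from_le_shifted[OF per lip solves_ode_from_mono[OF sol \<open>0 \<le> T1\<close>] sol,
        where n = n and m = j and b = "T1 + T2"] s \<open>0 \<le> T2\<close>
    by simp
  moreover have "v (T2 + s) c2 \<le> v T2 c2 + M"
    using increment[of T2 "T2 + s" c2] s \<open>0 \<le> M\<close> \<open>0 \<le> T2\<close> mult_left_le[of s M] by simp
  moreover have "j \<le> v T1 c1 + k - c2 + M + 1" and "k \<le> c2 + 1"
    unfolding j_def k_def by linarith+
  ultimately show ?thesis
    by argo
qed

theorem lemma2p1:
  fixes f :: "real \<times> real \<Rightarrow> real" and \<kappa> :: real
    and v :: "real \<Rightarrow> real \<Rightarrow> real"
  assumes f_cont: "continuous_on UNIV f"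
    and f_lip: "lipschitz_on \<kappa> UNIV f"
    and f_per: "\<And>r \<tau> (a::int) (b::int). f (r + of_int a, \<tau> + of_int b) = f (r, \<tau>)"
    and v_init: "\<And>c. v 0 c = c"
    and v_cont: "\<And>c. continuous_on {0..} (\<lambda>\<tau>. v \<tau> c)"
    and v_ode: "\<And>c \<tau>. \<tau> > 0 \<Longrightarrow> ((\<lambda>s. v s c) has_real_derivative f (v \<tau> c, \<tau>)) (at \<tau>)"
    and "\<sigma> > 0" and "l > 0" and "t > 0"
  shows "v ((\<sigma> + l) * t) ((\<sigma> + l) * c)
           \<le> v (\<sigma> * t) (\<sigma> * c) + v (l * t) (l * c) + 2 * ((SUP p. \<bar>f p\<bar>) + 1)"
proof -
  have "bdd_above (range (\<lambda>p. \<bar>f p\<bar>))"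
    using periodic_continuous_bounded[OF f_cont f_per]
    unfolding bounded_iff bdd_above_def by auto
  then have f_le_sup: "\<bar>f p\<bar> \<le> (SUP p. \<bar>f p\<bar>)" for p
    by (intro cSUP_upper) auto
  have lip: "f (x, \<tau>) - f (y, \<tau>) \<le> \<kappa> * (x - y)" if "y \<le> x" for x y \<tau>
    using lipschitz_onD[OF f_lip, of "(x, \<tau>)" "(y, \<tau>)"] that
    by (simp add: dist_Pair_Pair dist_real_def)
  have sol: "solves_ode_from f 0 (\<lambda>\<tau>. v \<tau> c')" for c'
    using v_cont v_ode by (simp add: solves_ode_from_def)
  show ?thesis
    using solves_ode_from_subadditive[OF f_per lip f_le_sup sol v_init,
        of "\<sigma> * t" "l * t" "\<sigma> * c" "l * c"] assms
    by (simp add: distrib_right)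
qed

end
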